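(* Let $\mathscr T$ be a functor satisfying (T1)–(T4) and $\mathfrak K=(K,\bigsqcup,\odot,{}^*,{\sim},e)$ a $\mathscr T$-based orthomodular dynamic algebra. Then (i) $K$ (with its quantale order $\sqsubseteq$) is an atomic lattice whose atoms are exactly the elements of $\mathscr T(K)$; (ii) the structure $\mathscr P(\mathscr T(\mathfrak K))=(\mathscr P(\mathscr T(K)),\bigcup,\boxdot,{}^\star,\boxtimes,\{e\})$ is a $\mathscr T$-based orthomodular dynamic algebra, and $h_{\mathfrak K}$ is an isomorphism from $\mathfrak K$ onto it.
   Context: Here $h_{\mathfrak K}\colon K\to\mathscr P(\mathscr T(K))$ is $h_{\mathfrak K}(v)=\{w\in\mathscr T(K)\mid w\sqsubseteq v\}$, and on the powerset $\mathscr P(\mathscr T(K))$: $A\boxdot B=h_{\mathfrak K}(\bigsqcup A\odot\bigsqcup B)$, $A^\star=h_{\mathfrak K}((\bigsqcup A)^* )$, $\boxtimes A=h_{\mathfrak K}({\sim}\bigsqcup A)$, joins are unions, unit $\{e\}$. An involutive unital quantale is $(Q,\bigsqcup,\odot,{}^*,e)$: $Q$ a complete join-semilattice (order $\sqsubseteq$), $\odot$ associative and distributing over arbitrary joins in each argument, $e$ a unit, ${}^*$ with $x^{**}=x$, $(x\odot y)^*=y^*\odot x^*$, $(\bigsqcup x_i)^*=\bigsqcup x_i^*$. An involutive generalized dynamic algebra (IDA) is such a quantale with ${\sim}\colon K\to K$ satisfying, for all $x,y$ and families $(x_i)$: ${\sim}(x\odot{\sim}{\sim}y)={\sim}(x\odot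 y)$; ${\sim}(\bigsqcup{\sim}{\sim}x_i)={\sim}(\bigsqcup x_i)$; $({\sim}x)^*={\sim}x$; ${\sim}{\sim}({\sim}{\sim}x\odot y)={\sim}({\sim}x\sqcup{\sim}({\sim}x\sqcup y))$. Test set $\widetilde K=\{{\sim}k\}$; $\bigvee W={\sim}{\sim}\bigsqcup W$; $w^\perp={\sim}w$; $k\preceq l$ iff $\bigvee\{k,l\}=l$; $k\bullet v={\sim}{\sim}(k\odot v)$; $k\equiv l$ iff $k\bullet w=l\bullet w$ for all $w\in\widetilde K$. IDA morphisms preserve joins, $\odot$, ${}^*$, unit, ${\sim}$ (category $\mathbb{IDA}$); isomorphisms are bijective morphisms; semi-Foulis means $(\widetilde K,\preceq,{}^\perp)$ is a complete orthomodular lattice. $\mathbb{IM}$: involutive monoids and homomorphisms. For a complete orthomodular lattice $\mathcal M$: $\pi_m(x)=m\wedge(m^\perp\vee x)$; $\mathbf{Lin}(\mathcal M)$ is the set of maps $f$ admitting $f^*$ with $f(x)\le y^\perp\iff x\le f^*(y)^\perp$, an IDA under pointwise joins, composition, ${}^*$, $\mathrm{id}$, ${\sim}f=\pi_{f(1)^\perp}$; for an involutive submonoid $L\supseteq\{\pi_m\}$, $\mathscr P(L)$ is the IDA of subsets of $L$ with union, setwise composition and involution, unit $\{\mathrm{id}\}$, ${\sim}A=\{\pi_{(\bigvee_{a\in A}a(1))^\perp}\}$. $\mathscr T\colon\mathbb{IDA}\to\mathbb{IM}$ satisfies: (T1) $\widetilde K\subseteq\mathscr T(K)\subseteq K$,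 $\mathscr T(K)$ an involutive submonoid; (T2) for semi-Foulis $\mathfrak K$ with $s=t\iff s\equiv t$ on $\mathscr T(K)$, $k\mapsto k\bullet(-)$ is an isomorphism $\mathscr T(\mathfrak K)\to\mathscr T(\mathbf{Lin}(\widetilde{\mathfrak K}))$; (T3) $f\mapsto\{f\}$ is an isomorphism $\mathscr T(\mathbf{Lin}(\mathcal M))\to\mathscr T(\mathscr P(\mathscr T(\mathbf{Lin}(\mathcal M))))$; (T4) $\mathscr T(f)$ is the restriction of $f$. A $\mathscr T$-based orthomodular dynamic algebra is an IDA with: (TODA1) $(\widetilde K,\preceq,{}^\perp)$ a complete orthomodular lattice; (TODA2) every $A$ with $\mathscr T(K)\subseteq A\subseteq K$ closed under $\odot$, ${}^*$, arbitrary joins equals $K$; (TODA3) for $S,T\subseteq\mathscr T(K)$, $\bigsqcup S=\bigsqcup T$ iff $S=T$; (TODA4) for $s,t\in\mathscr T(K)$, $s=t$ iff $s\equiv t$. *)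

theory Defs
  imports "HOL-Library.FuncSet"
begin

record 'a ida =
  ida_carrier :: "'a set"
  ida_jn      :: "'a set \<Rightarrow> 'a"
  ida_mult    :: "'a \<Rightarrow> 'a \<Rightarrow> 'a"
  ida_inv     :: "'a \<Rightarrow> 'a"
  ida_neg     :: "'a \<Rightarrow> 'a"
  ida_unit    :: "'a"

definition ida_le :: "('a, 'b) ida_scheme \<Rightarrow> 'a \<Rightarrow> 'a \<Rightarrow> bool" where
  "ida_le K x y \<longleftrightarrow> ida_jn K {x, y} = y"

definition is_IDA :: "('a, 'b) ida_scheme \<Rightarrow> bool" where
  "is_IDA K \<longleftrightarrow>
     (let C = ida_carrier K; jn = ida_jn K; m = ida_mult K; i = ida_inv K;
          n = ida_neg K; e = ida_unit K; le = ida_le K in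
     \<comment> \<open>complete join-semilattice\<close>
     (\<forall>x\<in>C. le x x) \<and>
     (\<forall>x\<in>C. \<forall>y\<in>C. le x y \<and> le y x \<longrightarrow> x = y) \<and>
     (\<forall>x\<in>C. \<forall>y\<in>C. \<forall>z\<in>C. le x y \<and> le y z \<longrightarrow> le x z) \<and>
     (\<forall>S. S \<subseteq> C \<longrightarrow> jn S \<in> C \<and> (\<forall>x\<in>S. le x (jn S)) \<and>
            (\<forall>u\<in>C. (\<forall>x\<in>S. le x u) \<longrightarrow> le (jn S) u)) \<and>
     \<comment> \<open>multiplication\<close>
     (\<forall>x\<in>C. \<forall>y\<in>C. m x y \<in> C) \<and>
     (\<forall>x\<in>C. \<forall>y\<in>C. \<forall>z\<in>C. m (m x y) z = m x (m y z)) \<and>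
     (\<forall>S y. S \<subseteq> C \<and> y \<in> C \<longrightarrow>
         m (jn S) y = jn ((\<lambda>x. m x y) ` S) \<and> m y (jn S) = jn ((\<lambda>x. m y x) ` S)) \<and>
     e \<in> C \<and> (\<forall>x\<in>C. m e x = x \<and> m x e = x) \<and>
     \<comment> \<open>involution\<close>
     (\<forall>x\<in>C. i x \<in> C \<and> i (i x) = x) \<and>
     (\<forall>x\<in>C. \<forall>y\<in>C. i (m x y) = m (i y) (i x)) \<and>
     (\<forall>S. S \<subseteq> C \<longrightarrow> i (jn S) = jn (i ` S)) \<and>
     \<comment> \<open>the operation \<sim>\<close>
     (\<forall>x\<in>C. n x \<in> C) \<and>
     (\<forall>x\<in>C. \<forall>y\<in>C. n (m x (n (n y))) = n (m x y)) \<and>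
     (\<forall>S. S \<subseteq> C \<longrightarrow> n (jn (n ` n ` S)) = n (jn S)) \<and>
     (\<forall>x\<in>C. i (n x) = n x) \<and>
     (\<forall>x\<in>C. \<forall>y\<in>C. n (n (m (n (n x)) y)) = n (jn {n x, n (jn {n x, y})})))"

definition ida_tests :: "('a, 'b) ida_scheme \<Rightarrow> 'a set" where
  "ida_tests K = ida_neg K ` ida_carrier K"

definition ida_bigvee :: "('a, 'b) ida_scheme \<Rightarrow> 'a set \<Rightarrow> 'a" where
  "ida_bigvee K W = ida_neg K (ida_neg K (ida_jn K W))"

definition test_le :: "('a, 'b) ida_scheme \<Rightarrow> 'a \<Rightarrow> 'a \<Rightarrow> bool" where
  "test_le K k l \<longleftrightarrow> ida_bigvee K {k, l} = l"

definition ida_bullet :: "('a, 'b) ida_scheme \<Rightarrow> 'a \<Rightarrow> 'a \<Rightarrow> 'a" where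
  "ida_bullet K k v = ida_neg K (ida_neg K (ida_mult K k v))"

definition ida_equiv :: "('a, 'b) ida_scheme \<Rightarrow> 'a \<Rightarrow> 'a \<Rightarrow> bool" where
  "ida_equiv K k l \<longleftrightarrow> (\<forall>w\<in>ida_tests K. ida_bullet K k w = ida_bullet K l w)"

definition ida_morphism :: "('a, 'c) ida_scheme \<Rightarrow> ('b, 'd) ida_scheme \<Rightarrow> ('a \<Rightarrow> 'b) \<Rightarrow> bool" where
  "ida_morphism K K' f \<longleftrightarrow>
     f \<in> ida_carrier K \<rightarrow> ida_carrier K' \<and>
     (\<forall>S. S \<subseteq> ida_carrier K \<longrightarrow> f (ida_jn K S) = ida_jn K' (f ` S)) \<and>
     (\<forall>x\<in>ida_carrier K. \<forall>y\<in>ida_carrier K. f (ida_mult K x y) = ida_mult K' (f x) (f y)) \<and>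
     (\<forall>x\<in>ida_carrier K. f (ida_inv K x) = ida_inv K' (f x)) \<and>
     (\<forall>x\<in>ida_carrier K. f (ida_neg K x) = ida_neg K' (f x)) \<and>
     f (ida_unit K) = ida_unit K'"

definition ida_iso :: "('a, 'c) ida_scheme \<Rightarrow> ('b, 'd) ida_scheme \<Rightarrow> ('a \<Rightarrow> 'b) \<Rightarrow> bool" where
  "ida_iso K K' f \<longleftrightarrow> ida_morphism K K' f \<and> bij_betw f (ida_carrier K) (ida_carrier K')"

definition im_iso :: "('a, 'c) ida_scheme \<Rightarrow> ('b, 'd) ida_scheme \<Rightarrow> ('a \<Rightarrow> 'b) \<Rightarrow> 'a set \<Rightarrow> 'b set \<Rightarrow> bool" where
  "im_iso K K' f S S' \<longleftrightarrow> bij_betw f S S' \<and>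
     (\<forall>x\<in>S. \<forall>y\<in>S. f (ida_mult K x y) = ida_mult K' (f x) (f y)) \<and>
     (\<forall>x\<in>S. f (ida_inv K x) = ida_inv K' (f x)) \<and>
     f (ida_unit K) = ida_unit K'"

definition is_lub :: "'x set \<Rightarrow> ('x \<Rightarrow> 'x \<Rightarrow> bool) \<Rightarrow> 'x set \<Rightarrow> 'x \<Rightarrow> bool" where
  "is_lub M le S u \<longleftrightarrow> u \<in> M \<and> (\<forall>x\<in>S. le x u) \<and> (\<forall>v\<in>M. (\<forall>x\<in>S. le x v) \<longrightarrow> le u v)"

definition is_glb :: "'x set \<Rightarrow> ('x \<Rightarrow> 'x \<Rightarrow> bool) \<Rightarrow> 'x set \<Rightarrow> 'x \<Rightarrow> bool" where
  "is_glb M le S u \<longleftrightarrow> u \<in> M \<and> (\<forall>x\<in>S. le u x) \<and> (\<forall>v\<in>M. (\<forall>x\<in>S. le v x) \<longrightarrow> le v u)"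

definition lsup :: "'x set \<Rightarrow> ('x \<Rightarrow> 'x \<Rightarrow> bool) \<Rightarrow> 'x set \<Rightarrow> 'x" where
  "lsup M le S = (THE u. is_lub M le S u)"

definition linf :: "'x set \<Rightarrow> ('x \<Rightarrow> 'x \<Rightarrow> bool) \<Rightarrow> 'x set \<Rightarrow> 'x" where
  "linf M le S = (THE u. is_glb M le S u)"

definition complete_oml :: "'x set \<Rightarrow> ('x \<Rightarrow> 'x \<Rightarrow> bool) \<Rightarrow> ('x \<Rightarrow> 'x) \<Rightarrow> bool" where
  "complete_oml M le oc \<longleftrightarrow>
     (\<forall>x\<in>M. le x x) \<and>
     (\<forall>x\<in>M. \<forall>y\<in>M. le x y \<and> le y x \<longrightarrow> x = y) \<and>
     (\<forall>x\<in>M. \<forall>y\<in>M. \<forall>z\<in>M. le x y \<and> le y z \<longrightarrow> le x z) \<and>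
     (\<forall>S. S \<subseteq> M \<longrightarrow> (\<exists>u. is_lub M le S u)) \<and>
     (\<forall>x\<in>M. oc x \<in> M \<and> oc (oc x) = x) \<and>
     (\<forall>x\<in>M. \<forall>y\<in>M. le x y \<longrightarrow> le (oc y) (oc x)) \<and>
     (\<forall>x\<in>M. lsup M le {x, oc x} = lsup M le M \<and> linf M le {x, oc x} = lsup M le {}) \<and>
     (\<forall>x\<in>M. \<forall>y\<in>M. le x y \<longrightarrow> y = lsup M le {x, linf M le {y, oc x}})"

definition semi_foulis :: "('a, 'b) ida_scheme \<Rightarrow> bool" where
  "semi_foulis K \<longleftrightarrow> complete_oml (ida_tests K) (test_le K) (ida_neg K)"

definition oml_proj :: "'x set \<Rightarrow> ('x \<Rightarrow> 'x \<Rightarrow> bool) \<Rightarrow> ('x \<Rightarrow> 'x) \<Rightarrow> 'x \<Rightarrow> ('x \<Rightarrow> 'x)" where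
  "oml_proj M le oc m = (\<lambda>x\<in>M. linf M le {m, lsup M le {oc m, x}})"

definition is_adjoint :: "'x set \<Rightarrow> ('x \<Rightarrow> 'x \<Rightarrow> bool) \<Rightarrow> ('x \<Rightarrow> 'x) \<Rightarrow> ('x \<Rightarrow> 'x) \<Rightarrow> ('x \<Rightarrow> 'x) \<Rightarrow> bool" where
  "is_adjoint M le oc f g \<longleftrightarrow> g \<in> M \<rightarrow>\<^sub>E M \<and>
     (\<forall>x\<in>M. \<forall>y\<in>M. le (f x) (oc y) \<longleftrightarrow> le x (oc (g y)))"

definition lin_maps :: "'x set \<Rightarrow> ('x \<Rightarrow> 'x \<Rightarrow> bool) \<Rightarrow> ('x \<Rightarrow> 'x) \<Rightarrow> ('x \<Rightarrow> 'x) set" where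
  "lin_maps M le oc = {f \<in> M \<rightarrow>\<^sub>E M. \<exists>g. is_adjoint M le oc f g}"

definition Lin :: "'x set \<Rightarrow> ('x \<Rightarrow> 'x \<Rightarrow> bool) \<Rightarrow> ('x \<Rightarrow> 'x) \<Rightarrow> ('x \<Rightarrow> 'x) ida" where
  "Lin M le oc =
     \<lparr> ida_carrier = lin_maps M le oc,
       ida_jn = (\<lambda>F. \<lambda>x\<in>M. lsup M le ((\<lambda>f. f x) ` F)),
       ida_mult = (\<lambda>f g. \<lambda>x\<in>M. f (g x)),
       ida_inv = (\<lambda>f. THE g. is_adjoint M le oc f g),
       ida_neg = (\<lambda>f. oml_proj M le oc (oc (f (lsup M le M)))),
       ida_unit = (\<lambda>x\<in>M. x) \<rparr>"

definition PL :: "'x set \<Rightarrow> ('x \<Rightarrow> 'x \<Rightarrow> bool) \<Rightarrow> ('x \<Rightarrow> 'x) \<Rightarrow> ('x \<Rightarrow> 'x) set \<Rightarrow> ('x \<Rightarrow> 'x) set ida" where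
  "PL M le oc L =
     \<lparr> ida_carrier = Pow L,
       ida_jn = (\<lambda>\<A>. \<Union>\<A>),
       ida_mult = (\<lambda>A B. {ida_mult (Lin M le oc) f g | f g. f \<in> A \<and> g \<in> B}),
       ida_inv = (\<lambda>A. ida_inv (Lin M le oc) ` A),
       ida_neg = (\<lambda>A. {oml_proj M le oc (oc (lsup M le ((\<lambda>a. a (lsup M le M)) ` A)))}),
       ida_unit = {ida_unit (Lin M le oc)} \<rparr>"

definition Lin_tests :: "('a, 'b) ida_scheme \<Rightarrow> ('a \<Rightarrow> 'a) ida" where
  "Lin_tests K = Lin (ida_tests K) (test_le K) (ida_neg K)"

section \<open>The functor T (conditions T1--T4, instance-wise)\<close>

definition T1_cond :: "('a ida \<Rightarrow> 'a set) \<Rightarrow> bool" where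
  "T1_cond T \<longleftrightarrow> (\<forall>K. is_IDA K \<longrightarrow>
     ida_tests K \<subseteq> T K \<and> T K \<subseteq> ida_carrier K \<and> ida_unit K \<in> T K \<and>
     (\<forall>x\<in>T K. \<forall>y\<in>T K. ida_mult K x y \<in> T K) \<and> (\<forall>x\<in>T K. ida_inv K x \<in> T K))"

definition T2_cond :: "('a ida \<Rightarrow> 'a set) \<Rightarrow> (('a \<Rightarrow> 'a) ida \<Rightarrow> ('a \<Rightarrow> 'a) set) \<Rightarrow> bool" where
  "T2_cond T TL \<longleftrightarrow> (\<forall>K. is_IDA K \<and> semi_foulis K \<and>
       (\<forall>s\<in>T K. \<forall>t\<in>T K. s = t \<longleftrightarrow> ida_equiv K s t) \<longrightarrow>
     im_iso K (Lin_tests K) (\<lambda>k. \<lambda>w\<in>ida_tests K. ida_bullet K k w) (T K) (TL (Lin_tests K)))"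

definition T3_cond :: "(('x \<Rightarrow> 'x) ida \<Rightarrow> ('x \<Rightarrow> 'x) set) \<Rightarrow> (('x \<Rightarrow> 'x) set ida \<Rightarrow> ('x \<Rightarrow> 'x) set set) \<Rightarrow> bool" where
  "T3_cond TL TP \<longleftrightarrow> (\<forall>M le oc. complete_oml M le oc \<longrightarrow>
     im_iso (Lin M le oc) (PL M le oc (TL (Lin M le oc))) (\<lambda>f. {f})
            (TL (Lin M le oc)) (TP (PL M le oc (TL (Lin M le oc)))))"

text \<open>T4: T(f) is the restriction of f; in particular f maps T(K) into T(K').\<close>
definition T4_cond :: "('a ida \<Rightarrow> 'a set) \<Rightarrow> ('b ida \<Rightarrow> 'b set) \<Rightarrow> bool" where
  "T4_cond T T' \<longleftrightarrow> (\<forall>K K' f. is_IDA K \<and> is_IDA K' \<and> ida_morphism K K' f \<longrightarrow> f ` T K \<subseteq> T' K')"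

text \<open>The functor T restricted to the carrier types relevant here: 'a, 'a set, the
  Lin-types over them and the powerset IDAs over those.\<close>
definition T_functor ::
  "('a ida \<Rightarrow> 'a set) \<Rightarrow> ('a set ida \<Rightarrow> 'a set set) \<Rightarrow>
   (('a \<Rightarrow> 'a) ida \<Rightarrow> ('a \<Rightarrow> 'a) set) \<Rightarrow> (('a set \<Rightarrow> 'a set) ida \<Rightarrow> ('a set \<Rightarrow> 'a set) set) \<Rightarrow>
   (('a \<Rightarrow> 'a) set ida \<Rightarrow> ('a \<Rightarrow> 'a) set set) \<Rightarrow>
   (('a set \<Rightarrow> 'a set) set ida \<Rightarrow> ('a set \<Rightarrow> 'a set) set set) \<Rightarrow> bool" where
  "T_functor Ta Tp TLa TLp TPa TPp \<longleftrightarrow>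
     T1_cond Ta \<and> T1_cond Tp \<and> T1_cond TLa \<and> T1_cond TLp \<and> T1_cond TPa \<and> T1_cond TPp \<and>
     T2_cond Ta TLa \<and> T2_cond Tp TLp \<and>
     T3_cond TLa TPa \<and> T3_cond TLp TPp \<and>
     T4_cond Ta Ta \<and> T4_cond Ta Tp \<and> T4_cond Tp Ta \<and> T4_cond Tp Tp \<and>
     T4_cond TLa TLa \<and> T4_cond TLa TPa \<and> T4_cond TPa TLa \<and> T4_cond TPa TPa \<and>
     T4_cond TLp TLp \<and> T4_cond TLp TPp \<and> T4_cond TPp TLp \<and> T4_cond TPp TPp"

definition T_ODA :: "('a ida \<Rightarrow> 'a set) \<Rightarrow> 'a ida \<Rightarrow> bool" where
  "T_ODA T K \<longleftrightarrow> is_IDA K \<and>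
     complete_oml (ida_tests K) (test_le K) (ida_neg K) \<and>
     (\<forall>A. T K \<subseteq> A \<and> A \<subseteq> ida_carrier K \<and>
          (\<forall>x\<in>A. \<forall>y\<in>A. ida_mult K x y \<in> A) \<and> (\<forall>x\<in>A. ida_inv K x \<in> A) \<and>
          (\<forall>S. S \<subseteq> A \<longrightarrow> ida_jn K S \<in> A) \<longrightarrow> A = ida_carrier K) \<and>
     (\<forall>S R. S \<subseteq> T K \<and> R \<subseteq> T K \<longrightarrow> (ida_jn K S = ida_jn K R \<longleftrightarrow> S = R)) \<and>
     (\<forall>s\<in>T K. \<forall>t\<in>T K. s = t \<longleftrightarrow> ida_equiv K s t)"

definition ida_bot :: "('a, 'b) ida_scheme \<Rightarrow> 'a" where
  "ida_bot K = ida_jn K {}"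

definition ida_atom :: "('a, 'b) ida_scheme \<Rightarrow> 'a \<Rightarrow> bool" where
  "ida_atom K a \<longleftrightarrow> a \<in> ida_carrier K \<and> a \<noteq> ida_bot K \<and>
     (\<forall>x\<in>ida_carrier K. ida_le K x a \<longrightarrow> x = ida_bot K \<or> x = a)"

definition atomic_lattice :: "('a, 'b) ida_scheme \<Rightarrow> bool" where
  "atomic_lattice K \<longleftrightarrow>
     (\<forall>x\<in>ida_carrier K. \<forall>y\<in>ida_carrier K.
        (\<exists>u. is_lub (ida_carrier K) (ida_le K) {x, y} u) \<and>
        (\<exists>u. is_glb (ida_carrier K) (ida_le K) {x, y} u)) \<and>
     (\<forall>x\<in>ida_carrier K. x \<noteq> ida_bot K \<longrightarrow> (\<exists>a. ida_atom K a \<and> ida_le K a x))"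

definition hK :: "('a ida \<Rightarrow> 'a set) \<Rightarrow> 'a ida \<Rightarrow> 'a \<Rightarrow> 'a set" where
  "hK T K v = {w \<in> T K. ida_le K w v}"

definition PT :: "('a ida \<Rightarrow> 'a set) \<Rightarrow> 'a ida \<Rightarrow> 'a set ida" where
  "PT T K =
     \<lparr> ida_carrier = Pow (T K),
       ida_jn = (\<lambda>\<A>. \<Union>\<A>),
       ida_mult = (\<lambda>A B. hK T K (ida_mult K (ida_jn K A) (ida_jn K B))),
       ida_inv = (\<lambda>A. hK T K (ida_inv K (ida_jn K A))),
       ida_neg = (\<lambda>A. hK T K (ida_neg K (ida_jn K A))),
       ida_unit = {ida_unit K} \<rparr>"

end

theory Submission
  imports Defs
begin

text \<open>
  Every element of \<open>K\<close> is the join of a subset of \<open>\<T>(K)\<close>: by (TODA2) it suffices that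
  these joins form a subalgebra containing \<open>\<T>(K)\<close>, and they do because \<open>\<odot>\<close> and \<open>\<^sup>*\<close>
  distribute over joins while \<open>\<T>(K)\<close> is an involutive submonoid. As the join is injective on
  subsets of \<open>\<T>(K)\<close> (TODA3), \<open>h\<^sub>K\<close> is an order isomorphism from \<open>K\<close> onto the powerset
  of \<open>\<T>(K)\<close>, with inverse the join. This makes \<open>K\<close> atomic with atoms \<open>\<T>(K)\<close>. The
  operations of \<open>\<P>(\<T>(K))\<close> are by definition those of \<open>K\<close> transported along \<open>h\<^sub>K\<close>, so \<open>h\<^sub>K\<close> is
  a bijective IDA morphism. Being an IDA, having a complete orthomodular test lattice and the
  conditions (TODA2)--(TODA4) are all invariant under such isomorphisms, provided \<open>\<T>\<close> of the
  image is the image of \<open>\<T>(K)\<close>; this follows from (T4) applied to \<open>h\<^sub>K\<close> and to its inverse.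
\<close>

locale IDA =
  fixes K :: "'a ida"
  assumes is_IDA: "is_IDA K"
begin

lemmas is_IDA_unfolded = is_IDA[unfolded is_IDA_def Let_def]

lemma le_refl: "x \<in> ida_carrier K \<Longrightarrow> ida_le K x x"
  using is_IDA_unfolded by (elim conjE) metis

lemma le_antisym:
  "x \<in> ida_carrier K \<Longrightarrow> y \<in> ida_carrier K \<Longrightarrow> ida_le K x y \<Longrightarrow> ida_le K y x \<Longrightarrow> x = y"
  using is_IDA_unfolded by (elim conjE) metis

lemma le_trans:
  "x \<in> ida_carrier K \<Longrightarrow> y \<in> ida_carrier K \<Longrightarrow> z \<in> ida_carrier K \<Longrightarrow>
   ida_le K x y \<Longrightarrow> ida_le K y z \<Longrightarrow> ida_le K x z"
  using is_IDA_unfolded by (elim conjE) metis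

lemma jn_closed: "S \<subseteq> ida_carrier K \<Longrightarrow> ida_jn K S \<in> ida_carrier K"
  using is_IDA_unfolded by (elim conjE) metis

lemma jn_upper: "S \<subseteq> ida_carrier K \<Longrightarrow> x \<in> S \<Longrightarrow> ida_le K x (ida_jn K S)"
  using is_IDA_unfolded by (elim conjE) metis

lemma jn_least:
  "S \<subseteq> ida_carrier K \<Longrightarrow> u \<in> ida_carrier K \<Longrightarrow> (\<And>x. x \<in> S \<Longrightarrow> ida_le K x u) \<Longrightarrow>
   ida_le K (ida_jn K S) u"
  using is_IDA_unfolded by (elim conjE) metis

lemma mult_closed: "x \<in> ida_carrier K \<Longrightarrow> y \<in> ida_carrier K \<Longrightarrow> ida_mult K x y \<in> ida_carrier K"
  using is_IDA_unfolded by (elim conjE) metis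

lemma mult_assoc:
  "x \<in> ida_carrier K \<Longrightarrow> y \<in> ida_carrier K \<Longrightarrow> z \<in> ida_carrier K \<Longrightarrow>
   ida_mult K (ida_mult K x y) z = ida_mult K x (ida_mult K y z)"
  using is_IDA_unfolded by (elim conjE) metis

lemma mult_jn_left:
  "S \<subseteq> ida_carrier K \<Longrightarrow> y \<in> ida_carrier K \<Longrightarrow>
   ida_mult K (ida_jn K S) y = ida_jn K ((\<lambda>x. ida_mult K x y) ` S)"
  using is_IDA_unfolded by (elim conjE) metis

lemma mult_jn_right:
  "S \<subseteq> ida_carrier K \<Longrightarrow> y \<in> ida_carrier K \<Longrightarrow>
   ida_mult K y (ida_jn K S) = ida_jn K ((\<lambda>x. ida_mult K y x) ` S)"
  using is_IDA_unfolded by (elim conjE) metis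

lemma unit_closed: "ida_unit K \<in> ida_carrier K"
  using is_IDA_unfolded by (elim conjE) metis

lemma unit_left: "x \<in> ida_carrier K \<Longrightarrow> ida_mult K (ida_unit K) x = x"
  using is_IDA_unfolded by (elim conjE) metis

lemma unit_right: "x \<in> ida_carrier K \<Longrightarrow> ida_mult K x (ida_unit K) = x"
  using is_IDA_unfolded by (elim conjE) metis

lemma inv_closed: "x \<in> ida_carrier K \<Longrightarrow> ida_inv K x \<in> ida_carrier K"
  using is_IDA_unfolded by (elim conjE) metis

lemma inv_inv: "x \<in> ida_carrier K \<Longrightarrow> ida_inv K (ida_inv K x) = x"
  using is_IDA_unfolded by (elim conjE) metis

lemma inv_mult:
  "x \<in> ida_carrier K \<Longrightarrow> y \<in> ida_carrier K \<Longrightarrow>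
   ida_inv K (ida_mult K x y) = ida_mult K (ida_inv K y) (ida_inv K x)"
  using is_IDA_unfolded by (elim conjE) metis

lemma inv_jn: "S \<subseteq> ida_carrier K \<Longrightarrow> ida_inv K (ida_jn K S) = ida_jn K (ida_inv K ` S)"
  using is_IDA_unfolded by (elim conjE) metis

lemma neg_closed: "x \<in> ida_carrier K \<Longrightarrow> ida_neg K x \<in> ida_carrier K"
  using is_IDA_unfolded by (elim conjE) metis

lemma neg_mult_neg_neg:
  "x \<in> ida_carrier K \<Longrightarrow> y \<in> ida_carrier K \<Longrightarrow>
   ida_neg K (ida_mult K x (ida_neg K (ida_neg K y))) = ida_neg K (ida_mult K x y)"
  using is_IDA_unfolded by (elim conjE) metis

lemma neg_jn_neg_neg:
  "S \<subseteq> ida_carrier K \<Longrightarrow> ida_neg K (ida_jn K (ida_neg K ` ida_neg K ` S)) = ida_neg K (ida_jn K S)"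
  using is_IDA_unfolded by (elim conjE) metis

lemma inv_neg: "x \<in> ida_carrier K \<Longrightarrow> ida_inv K (ida_neg K x) = ida_neg K x"
  using is_IDA_unfolded by (elim conjE) metis

lemma neg_neg_mult_neg_neg:
  "x \<in> ida_carrier K \<Longrightarrow> y \<in> ida_carrier K \<Longrightarrow>
   ida_neg K (ida_neg K (ida_mult K (ida_neg K (ida_neg K x)) y)) =
   ida_neg K (ida_jn K {ida_neg K x, ida_neg K (ida_jn K {ida_neg K x, y})})"
  using is_IDA_unfolded by (elim conjE) metis

lemma jn_Union:
  assumes "\<And>S. S \<in> SS \<Longrightarrow> S \<subseteq> ida_carrier K"
  shows "ida_jn K (ida_jn K ` SS) = ida_jn K (\<Union>SS)"
proof (rule le_antisym)
  have SS: "ida_jn K ` SS \<subseteq> ida_carrier K" "\<Union>SS \<subseteq> ida_carrier K"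
    using assms jn_closed by auto
  show "ida_jn K (ida_jn K ` SS) \<in> ida_carrier K" "ida_jn K (\<Union>SS) \<in> ida_carrier K"
    using SS jn_closed by auto
  show "ida_le K (ida_jn K (ida_jn K ` SS)) (ida_jn K (\<Union>SS))"
  proof (intro jn_least jn_closed SS)
    fix y assume "y \<in> ida_jn K ` SS"
    then obtain S where S: "S \<in> SS" "y = ida_jn K S" by blast
    with assms have "S \<subseteq> ida_carrier K" by blast
    then show "ida_le K y (ida_jn K (\<Union>SS))"
      unfolding S(2) using S(1) SS by (intro jn_least jn_closed) (auto intro: jn_upper)
  qed
  show "ida_le K (ida_jn K (\<Union>SS)) (ida_jn K (ida_jn K ` SS))"
  proof (intro jn_least jn_closed SS)
    fix x assume "x \<in> \<Union>SS"
    then obtain S where S: "S \<in> SS" "x \<in> S" by blast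
    with assms have "S \<subseteq> ida_carrier K" by blast
    with S SS have "ida_le K x (ida_jn K S)" "ida_le K (ida_jn K S) (ida_jn K (ida_jn K ` SS))"
      by (auto intro: jn_upper)
    with \<open>S \<subseteq> ida_carrier K\<close> S SS show "ida_le K x (ida_jn K (ida_jn K ` SS))"
      by (meson le_trans jn_closed subsetD)
  qed
qed

lemma jn_singleton: "x \<in> ida_carrier K \<Longrightarrow> ida_jn K {x} = x"
  by (rule le_antisym) (auto intro: jn_closed jn_least le_refl jn_upper)

lemma mult_jn_jn:
  assumes "S \<subseteq> ida_carrier K" "R \<subseteq> ida_carrier K"
  shows "ida_mult K (ida_jn K S) (ida_jn K R) = ida_jn K ((\<lambda>(s, r). ida_mult K s r) ` (S \<times> R))"
proof -
  have "ida_mult K (ida_jn K S) (ida_jn K R) = ida_jn K ((\<lambda>s. ida_mult K s (ida_jn K R)) ` S)"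
    using assms by (simp add: mult_jn_left jn_closed)
  also have "\<dots> = ida_jn K (ida_jn K ` (\<lambda>s. (\<lambda>r. ida_mult K s r) ` R) ` S)"
    using assms by (simp add: mult_jn_right image_image subset_iff)
  also have "\<dots> = ida_jn K (\<Union>s\<in>S. (\<lambda>r. ida_mult K s r) ` R)"
    using assms by (intro jn_Union) (auto intro: mult_closed)
  also have "(\<Union>s\<in>S. (\<lambda>r. ida_mult K s r) ` R) = (\<lambda>(s, r). ida_mult K s r) ` (S \<times> R)"
    by auto
  finally show ?thesis .
qed

end

section \<open>Transport of complete orthomodular lattices\<close>

lemma is_lub_unique:
  assumes "\<forall>x\<in>M. \<forall>y\<in>M. le x y \<and> le y x \<longrightarrow> x = y" "is_lub M le S u" "is_lub M le S v"
  shows "u = v"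
  using assms unfolding is_lub_def by blast

lemma is_glb_unique:
  assumes "\<forall>x\<in>M. \<forall>y\<in>M. le x y \<and> le y x \<longrightarrow> x = y" "is_glb M le S u" "is_glb M le S v"
  shows "u = v"
  using assms unfolding is_glb_def by blast

lemma lsup_eqI:
  assumes "\<forall>x\<in>M. \<forall>y\<in>M. le x y \<and> le y x \<longrightarrow> x = y" "is_lub M le S u"
  shows "lsup M le S = u"
  unfolding lsup_def using assms(2) by (rule the_equality) (rule is_lub_unique[OF assms(1) _ assms(2)])

lemma linf_eqI:
  assumes "\<forall>x\<in>M. \<forall>y\<in>M. le x y \<and> le y x \<longrightarrow> x = y" "is_glb M le S u"
  shows "linf M le S = u"
  unfolding linf_def using assms(2) by (rule the_equality) (rule is_glb_unique[OF assms(1) _ assms(2)])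

lemma is_glb_if_is_lub_lower_bounds:
  "is_lub M le {v \<in> M. \<forall>x\<in>S. le v x} u \<Longrightarrow> S \<subseteq> M \<Longrightarrow> is_glb M le S u"
  unfolding is_lub_def is_glb_def by blast

locale complete_oml_iso =
  fixes M :: "'x set" and le oc and M' :: "'y set" and le' oc' and f :: "'x \<Rightarrow> 'y"
  assumes complete_oml: "complete_oml M le oc"
    and bij: "bij_betw f M M'"
    and le_iff: "\<And>a b. a \<in> M \<Longrightarrow> b \<in> M \<Longrightarrow> le' (f a) (f b) \<longleftrightarrow> le a b"
    and oc_commute: "\<And>a. a \<in> M \<Longrightarrow> oc' (f a) = f (oc a)"
begin

lemmas complete_oml_unfolded = complete_oml[unfolded complete_oml_def]

lemma refl: "x \<in> M \<Longrightarrow> le x x"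
  using complete_oml_unfolded by (elim conjE) metis

lemma antisym: "\<forall>x\<in>M. \<forall>y\<in>M. le x y \<and> le y x \<longrightarrow> x = y"
  using complete_oml_unfolded by (elim conjE) metis

lemma trans: "x \<in> M \<Longrightarrow> y \<in> M \<Longrightarrow> z \<in> M \<Longrightarrow> le x y \<Longrightarrow> le y z \<Longrightarrow> le x z"
  using complete_oml_unfolded by (elim conjE) metis

lemma lub_exists: "S \<subseteq> M \<Longrightarrow> \<exists>u. is_lub M le S u"
  using complete_oml_unfolded by (elim conjE) blast

lemma oc_closed: "x \<in> M \<Longrightarrow> oc x \<in> M"
  using complete_oml_unfolded by (elim conjE) metis

lemma oc_oc: "x \<in> M \<Longrightarrow> oc (oc x) = x"
  using complete_oml_unfolded by (elim conjE) metis

lemma oc_antimono: "x \<in> M \<Longrightarrow> y \<in> M \<Longrightarrow> le x y \<Longrightarrow> le (oc y) (oc x)"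
  using complete_oml_unfolded by (elim conjE) metis

lemma lsup_oc: "x \<in> M \<Longrightarrow> lsup M le {x, oc x} = lsup M le M"
  using complete_oml_unfolded by (elim conjE) metis

lemma linf_oc: "x \<in> M \<Longrightarrow> linf M le {x, oc x} = lsup M le {}"
  using complete_oml_unfolded by (elim conjE) metis

lemma orthomodular: "x \<in> M \<Longrightarrow> y \<in> M \<Longrightarrow> le x y \<Longrightarrow> y = lsup M le {x, linf M le {y, oc x}}"
  using complete_oml_unfolded by (elim conjE) metis

lemma target_eq: "M' = f ` M"
  using bij by (simp add: bij_betw_def)

lemma ball_target: "(\<forall>x\<in>M'. P x) \<longleftrightarrow> (\<forall>x\<in>M. P (f x))"
  by (simp add: target_eq)

lemma all_subset_target: "(\<forall>S. S \<subseteq> M' \<longrightarrow> P S) \<longleftrightarrow> (\<forall>S. S \<subseteq> M \<longrightarrow> P (f ` S))"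
  unfolding target_eq subset_image_iff by auto

lemma antisym_target: "\<forall>x\<in>M'. \<forall>y\<in>M'. le' x y \<and> le' y x \<longrightarrow> x = y"
  unfolding ball_target using antisym by (auto simp: le_iff)

lemma is_lub_image: "S \<subseteq> M \<Longrightarrow> u \<in> M \<Longrightarrow> is_lub M' le' (f ` S) (f u) \<longleftrightarrow> is_lub M le S u"
  unfolding is_lub_def ball_target by (auto simp: target_eq le_iff subset_iff)

lemma is_glb_image: "S \<subseteq> M \<Longrightarrow> u \<in> M \<Longrightarrow> is_glb M' le' (f ` S) (f u) \<longleftrightarrow> is_glb M le S u"
  unfolding is_glb_def ball_target by (auto simp: target_eq le_iff subset_iff)

lemma is_lub_lsup: "S \<subseteq> M \<Longrightarrow> is_lub M le S (lsup M le S)"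
  using lub_exists lsup_eqI[OF antisym] by metis

lemma is_glb_linf: "S \<subseteq> M \<Longrightarrow> is_glb M le S (linf M le S)"
proof -
  assume S: "S \<subseteq> M"
  obtain u where "is_lub M le {v \<in> M. \<forall>x\<in>S. le v x} u"
    using lub_exists[of "{v \<in> M. \<forall>x\<in>S. le v x}"] by blast
  then have "is_glb M le S u" using S by (rule is_glb_if_is_lub_lower_bounds)
  then show ?thesis using linf_eqI[OF antisym] by simp
qed

lemma lsup_image: "S \<subseteq> M \<Longrightarrow> lsup M' le' (f ` S) = f (lsup M le S)"
proof -
  assume S: "S \<subseteq> M"
  then have "is_lub M le S (lsup M le S)" by (rule is_lub_lsup)
  then have "is_lub M' le' (f ` S) (f (lsup M le S))"
    using S is_lub_image by (simp add: is_lub_def)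
  then show ?thesis by (rule lsup_eqI[OF antisym_target])
qed

lemma linf_image: "S \<subseteq> M \<Longrightarrow> linf M' le' (f ` S) = f (linf M le S)"
proof -
  assume S: "S \<subseteq> M"
  then have "is_glb M le S (linf M le S)" by (rule is_glb_linf)
  then have "is_glb M' le' (f ` S) (f (linf M le S))"
    using S is_glb_image by (simp add: is_glb_def)
  then show ?thesis by (rule linf_eqI[OF antisym_target])
qed

lemma lsup_pair_image: "x \<in> M \<Longrightarrow> y \<in> M \<Longrightarrow> lsup M' le' {f x, f y} = f (lsup M le {x, y})"
  using lsup_image[of "{x, y}"] by simp

lemma linf_pair_image: "x \<in> M \<Longrightarrow> y \<in> M \<Longrightarrow> linf M' le' {f x, f y} = f (linf M le {x, y})"
  using linf_image[of "{x, y}"] by simp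

lemma complete_oml_target: "complete_oml M' le' oc'"
  unfolding complete_oml_def ball_target all_subset_target
proof (intro conjI ballI allI impI)
  show "le' (f x) (f x)" if "x \<in> M" for x
    using that by (simp add: le_iff refl)
  show "f x = f y" if "x \<in> M" "y \<in> M" "le' (f x) (f y) \<and> le' (f y) (f x)" for x y
    using that antisym le_iff by metis
  show "le' (f x) (f z)" if "x \<in> M" "y \<in> M" "z \<in> M" "le' (f x) (f y) \<and> le' (f y) (f z)" for x y z
    using that trans le_iff by metis
  show "\<exists>u. is_lub M' le' (f ` S) u" if "S \<subseteq> M" for S
  proof -
    have "is_lub M le S (lsup M le S)" using that by (rule is_lub_lsup)
    moreover from this have "lsup M le S \<in> M" by (simp add: is_lub_def)
    ultimately show ?thesis using that is_lub_image by blast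
  qed
  show "oc' (f x) \<in> M'" "oc' (oc' (f x)) = f x" if "x \<in> M" for x
    using that by (simp_all add: oc_commute oc_closed oc_oc target_eq)
  show "le' (oc' (f y)) (oc' (f x))" if "x \<in> M" "y \<in> M" "le' (f x) (f y)" for x y
    using that by (simp add: oc_commute oc_closed le_iff oc_antimono)
  show "lsup M' le' {f x, oc' (f x)} = lsup M' le' M'" "linf M' le' {f x, oc' (f x)} = lsup M' le' {}"
    if "x \<in> M" for x
    using that lsup_image[of M] lsup_image[of "{}"]
    by (simp_all add: oc_commute oc_closed lsup_pair_image linf_pair_image target_eq[symmetric] lsup_oc linf_oc)
  show "f y = lsup M' le' {f x, linf M' le' {f y, oc' (f x)}}" if "x \<in> M" "y \<in> M" "le' (f x) (f y)" for x y
  proof -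
    have "linf M le {y, oc x} \<in> M"
      using that oc_closed is_glb_linf[of "{y, oc x}"] unfolding is_glb_def by simp
    then show ?thesis
      using that orthomodular by (simp add: oc_commute oc_closed le_iff lsup_pair_image linf_pair_image)
  qed
qed

end

section \<open>Transport along bijective IDA morphisms\<close>

locale IDA_iso = IDA K for K :: "'a ida" +
  fixes K' :: "'c ida" and f :: "'a \<Rightarrow> 'c"
  assumes morphism: "ida_morphism K K' f"
    and bij: "bij_betw f (ida_carrier K) (ida_carrier K')"
begin

lemma target_eq: "ida_carrier K' = f ` ida_carrier K"
  using bij by (simp add: bij_betw_def)

lemma ball_target: "(\<forall>x\<in>ida_carrier K'. P x) \<longleftrightarrow> (\<forall>x\<in>ida_carrier K. P (f x))"
  by (simp add: target_eq)

lemma all_subset_target: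
  "(\<forall>S. S \<subseteq> ida_carrier K' \<longrightarrow> P S) \<longleftrightarrow> (\<forall>S. S \<subseteq> ida_carrier K \<longrightarrow> P (f ` S))"
  unfolding target_eq subset_image_iff by auto

lemma inj_iff: "x \<in> ida_carrier K \<Longrightarrow> y \<in> ida_carrier K \<Longrightarrow> f x = f y \<longleftrightarrow> x = y"
  using bij by (auto simp: bij_betw_def inj_on_def)

lemma closed_target: "x \<in> ida_carrier K \<Longrightarrow> f x \<in> ida_carrier K'"
  using morphism unfolding ida_morphism_def by blast

lemma jn_target: "S \<subseteq> ida_carrier K \<Longrightarrow> ida_jn K' (f ` S) = f (ida_jn K S)"
  using morphism unfolding ida_morphism_def by simp

lemma jn_pair_target:
  "x \<in> ida_carrier K \<Longrightarrow> y \<in> ida_carrier K \<Longrightarrow> ida_jn K' {f x, f y} = f (ida_jn K {x, y})"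
  using jn_target[of "{x, y}"] by simp

lemma mult_target:
  "x \<in> ida_carrier K \<Longrightarrow> y \<in> ida_carrier K \<Longrightarrow> ida_mult K' (f x) (f y) = f (ida_mult K x y)"
  using morphism unfolding ida_morphism_def by simp

lemma inv_target: "x \<in> ida_carrier K \<Longrightarrow> ida_inv K' (f x) = f (ida_inv K x)"
  using morphism unfolding ida_morphism_def by simp

lemma neg_target: "x \<in> ida_carrier K \<Longrightarrow> ida_neg K' (f x) = f (ida_neg K x)"
  using morphism unfolding ida_morphism_def by simp

lemma unit_target: "ida_unit K' = f (ida_unit K)"
  using morphism unfolding ida_morphism_def by simp

lemma le_target_iff: "x \<in> ida_carrier K \<Longrightarrow> y \<in> ida_carrier K \<Longrightarrow> ida_le K' (f x) (f y) \<longleftrightarrow> ida_le K x y"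
  unfolding ida_le_def by (simp add: jn_pair_target inj_iff jn_closed)

lemma image_target:
  assumes "S \<subseteq> ida_carrier K" "\<And>x. x \<in> ida_carrier K \<Longrightarrow> g (f x) = f (h x)"
  shows "g ` f ` S = f ` h ` S"
  unfolding image_image using assms by (intro image_cong) auto

lemma is_IDA_target: "is_IDA K'"
  unfolding is_IDA_def Let_def ball_target all_subset_target
  apply (intro conjI)
  subgoal by (simp add: le_target_iff le_refl)
  subgoal using le_antisym by (auto simp: le_target_iff)
  subgoal by (simp add: le_target_iff) (metis le_trans)
  subgoal
  proof (intro allI impI conjI ballI)
    fix S assume S: "S \<subseteq> ida_carrier K"
    show "ida_jn K' (f ` S) \<in> ida_carrier K'"
      using S by (simp add: jn_target jn_closed closed_target)
    show "ida_le K' x' (ida_jn K' (f ` S))" if x': "x' \<in> f ` S" for x'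
    proof -
      obtain x where x: "x \<in> S" "x' = f x" using x' by blast
      with S have "x \<in> ida_carrier K" by blast
      with x S show ?thesis by (simp add: jn_target le_target_iff jn_closed jn_upper)
    qed
    show "ida_le K' (ida_jn K' (f ` S)) (f u)"
      if "u \<in> ida_carrier K" "\<forall>x'\<in>f ` S. ida_le K' x' (f u)" for u
      using that S by (auto simp: jn_target le_target_iff jn_closed subset_iff intro!: jn_least)
  qed
  subgoal by (simp add: mult_target closed_target mult_closed)
  subgoal by (simp add: mult_target mult_closed mult_assoc)
  subgoal
  proof (intro allI impI)
    fix S' y' assume "S' \<subseteq> ida_carrier K' \<and> y' \<in> ida_carrier K'"
    then obtain S y where S: "S \<subseteq> ida_carrier K" "S' = f ` S" and y: "y \<in> ida_carrier K" "y' = f y"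
      by (auto simp: target_eq subset_image_iff)
    moreover have "(\<lambda>x. ida_mult K' x (f y)) ` f ` S = f ` (\<lambda>x. ida_mult K x y) ` S"
      "(\<lambda>x. ida_mult K' (f y) x) ` f ` S = f ` (\<lambda>x. ida_mult K y x) ` S"
      using S y by (intro image_target; simp add: mult_target)+
    moreover have "(\<lambda>x. ida_mult K x y) ` S \<subseteq> ida_carrier K" "(\<lambda>x. ida_mult K y x) ` S \<subseteq> ida_carrier K"
      using S y mult_closed by auto
    ultimately show "ida_mult K' (ida_jn K' S') y' = ida_jn K' ((\<lambda>x. ida_mult K' x y') ` S') \<and>
      ida_mult K' y' (ida_jn K' S') = ida_jn K' ((\<lambda>x. ida_mult K' y' x) ` S')"
      by (simp add: jn_target mult_target jn_closed mult_jn_left mult_jn_right)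
  qed
  subgoal by (simp add: unit_target closed_target unit_closed)
  subgoal by (simp add: unit_target mult_target unit_closed unit_left unit_right)
  subgoal by (simp add: inv_target inv_closed closed_target inv_inv)
  subgoal by (simp add: inv_target mult_target inv_closed mult_closed inv_mult)
  subgoal
  proof (intro allI impI)
    fix S assume S: "S \<subseteq> ida_carrier K"
    have "ida_inv K' ` f ` S = f ` ida_inv K ` S"
      by (rule image_target[OF S]) (simp add: inv_target)
    moreover have "ida_inv K ` S \<subseteq> ida_carrier K"
      using S inv_closed by auto
    ultimately show "ida_inv K' (ida_jn K' (f ` S)) = ida_jn K' (ida_inv K' ` f ` S)"
      using S by (simp add: jn_target inv_target jn_closed inv_jn)
  qed
  subgoal by (simp add: neg_target closed_target neg_closed)
  subgoal by (simp add: neg_target mult_target neg_closed mult_closed neg_mult_neg_neg)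
  subgoal
  proof (intro allI impI)
    fix S assume S: "S \<subseteq> ida_carrier K"
    have nS: "ida_neg K ` S \<subseteq> ida_carrier K" "ida_neg K ` ida_neg K ` S \<subseteq> ida_carrier K"
      using S neg_closed by auto
    have "ida_neg K' ` ida_neg K' ` f ` S = f ` ida_neg K ` ida_neg K ` S"
      using image_target[OF S, of "ida_neg K'" "ida_neg K"] image_target[OF nS(1), of "ida_neg K'" "ida_neg K"]
      by (simp add: neg_target)
    moreover note nS(2)
    ultimately show "ida_neg K' (ida_jn K' (ida_neg K' ` ida_neg K' ` f ` S)) = ida_neg K' (ida_jn K' (f ` S))"
      using S by (simp add: jn_target neg_target jn_closed neg_jn_neg_neg)
  qed
  subgoal by (simp add: neg_target inv_target neg_closed inv_neg)
  subgoal by (simp add: neg_target mult_target jn_pair_target neg_closed mult_closed jn_closed neg_neg_mult_neg_neg)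
  done

lemma inv_into_target:
  assumes "x' \<in> ida_carrier K'"
  shows "inv_into (ida_carrier K) f x' \<in> ida_carrier K" "f (inv_into (ida_carrier K) f x') = x'"
  using assms by (simp_all add: target_eq inv_into_into f_inv_into_f)

lemma morphism_inv_into: "ida_morphism K' K (inv_into (ida_carrier K) f)"
proof -
  let ?g = "inv_into (ida_carrier K) f"
  have g_f: "?g (f x) = x" if "x \<in> ida_carrier K" for x
    using bij that by (simp add: bij_betw_def inv_into_f_f)
  have g_eqI: "?g x' = x" if "x \<in> ida_carrier K" "x' = f x" for x x'
    using that g_f by simp
  show ?thesis
    unfolding ida_morphism_def
  proof (intro conjI ballI allI impI)
    show "?g \<in> ida_carrier K' \<rightarrow> ida_carrier K"
      using inv_into_target by blast
    show "?g (ida_jn K' S') = ida_jn K (?g ` S')" if "S' \<subseteq> ida_carrier K'" for S'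
    proof (rule g_eqI)
      have "?g ` S' \<subseteq> ida_carrier K" using that inv_into_target by blast
      moreover have "f ` ?g ` S' = S'" using that inv_into_target by (force simp: image_image)
      ultimately show "ida_jn K (?g ` S') \<in> ida_carrier K" "ida_jn K' S' = f (ida_jn K (?g ` S'))"
        by (simp_all add: jn_closed jn_target[symmetric])
    qed
    show "?g (ida_mult K' x' y') = ida_mult K (?g x') (?g y')"
      if "x' \<in> ida_carrier K'" "y' \<in> ida_carrier K'" for x' y'
      using that by (intro g_eqI) (simp_all add: inv_into_target mult_closed mult_target[symmetric])
    show "?g (ida_inv K' x') = ida_inv K (?g x')" "?g (ida_neg K' x') = ida_neg K (?g x')"
      if "x' \<in> ida_carrier K'" for x'
      using that by (auto intro!: g_eqI simp: inv_into_target inv_closed neg_closed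
          inv_target[symmetric] neg_target[symmetric])
    show "?g (ida_unit K') = ida_unit K"
      by (simp add: unit_target g_f unit_closed)
  qed
qed

lemma tests_target: "ida_tests K' = f ` ida_tests K"
  unfolding ida_tests_def target_eq image_image by (rule image_cong) (simp_all add: neg_target)

lemma tests_subset: "ida_tests K \<subseteq> ida_carrier K"
  unfolding ida_tests_def using neg_closed by blast

lemma test_le_target_iff:
  "a \<in> ida_carrier K \<Longrightarrow> b \<in> ida_carrier K \<Longrightarrow> test_le K' (f a) (f b) \<longleftrightarrow> test_le K a b"
  unfolding test_le_def ida_bigvee_def
  by (simp add: jn_pair_target neg_target jn_closed neg_closed inj_iff)

lemma equiv_target_iff:
  "s \<in> ida_carrier K \<Longrightarrow> t \<in> ida_carrier K \<Longrightarrow> ida_equiv K' (f s) (f t) \<longleftrightarrow> ida_equiv K s t"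
  unfolding ida_equiv_def ida_bullet_def tests_target
  using tests_subset by (simp add: mult_target neg_target mult_closed neg_closed inj_iff subset_iff)

lemma complete_oml_tests_target:
  assumes "complete_oml (ida_tests K) (test_le K) (ida_neg K)"
  shows "complete_oml (ida_tests K') (test_le K') (ida_neg K')"
proof (rule complete_oml_iso.complete_oml_target[OF complete_oml_iso.intro, OF assms])
  show "bij_betw f (ida_tests K) (ida_tests K')"
    using bij tests_subset tests_target[symmetric] by (rule bij_betw_subset)
  show "test_le K' (f a) (f b) \<longleftrightarrow> test_le K a b" if "a \<in> ida_tests K" "b \<in> ida_tests K" for a b
    using that tests_subset test_le_target_iff by blast
  show "ida_neg K' (f a) = f (ida_neg K a)" if "a \<in> ida_tests K" for a
    using that tests_subset neg_target by blast
qed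

lemma T_ODA_target:
  assumes "T_ODA T K" and T_subset: "T K \<subseteq> ida_carrier K" and T': "T' K' = f ` T K"
  shows "T_ODA T' K'"
proof -
  have oml: "complete_oml (ida_tests K) (test_le K) (ida_neg K)"
    and generated: "\<And>A. T K \<subseteq> A \<Longrightarrow> A \<subseteq> ida_carrier K \<Longrightarrow>
      \<forall>x\<in>A. \<forall>y\<in>A. ida_mult K x y \<in> A \<Longrightarrow> \<forall>x\<in>A. ida_inv K x \<in> A \<Longrightarrow>
      \<forall>S. S \<subseteq> A \<longrightarrow> ida_jn K S \<in> A \<Longrightarrow> A = ida_carrier K"
    and jn_eq_iff: "\<And>S R. S \<subseteq> T K \<Longrightarrow> R \<subseteq> T K \<Longrightarrow> ida_jn K S = ida_jn K R \<longleftrightarrow> S = R"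
    and eq_iff_equiv: "\<And>s t. s \<in> T K \<Longrightarrow> t \<in> T K \<Longrightarrow> s = t \<longleftrightarrow> ida_equiv K s t"
    using assms(1) unfolding T_ODA_def by blast+
  have "A' = ida_carrier K'" if A': "T' K' \<subseteq> A'" "A' \<subseteq> ida_carrier K'"
    "\<forall>x\<in>A'. \<forall>y\<in>A'. ida_mult K' x y \<in> A'" "\<forall>x\<in>A'. ida_inv K' x \<in> A'"
    "\<forall>S. S \<subseteq> A' \<longrightarrow> ida_jn K' S \<in> A'" for A'
  proof -
    let ?A = "{x \<in> ida_carrier K. f x \<in> A'}"
    have "?A = ida_carrier K"
    proof (rule generated)
      show "\<forall>S. S \<subseteq> ?A \<longrightarrow> ida_jn K S \<in> ?A"
      proof (intro allI impI)
        fix S assume "S \<subseteq> ?A"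
        then have "S \<subseteq> ida_carrier K" "f ` S \<subseteq> A'" by auto
        with A'(5) show "ida_jn K S \<in> ?A"
          by (simp add: jn_closed jn_target[symmetric])
      qed
    qed (use A' T_subset T' in \<open>auto simp: mult_closed inv_closed mult_target[symmetric] inv_target[symmetric]\<close>)
    with A'(2) show ?thesis by (auto simp: target_eq)
  qed
  moreover have "ida_jn K' S' = ida_jn K' R' \<longleftrightarrow> S' = R'"
    if "S' \<subseteq> T' K'" "R' \<subseteq> T' K'" for S' R'
  proof -
    from that obtain S R where S: "S \<subseteq> T K" "S' = f ` S" and R: "R \<subseteq> T K" "R' = f ` R"
      using T' by (auto simp: subset_image_iff)
    with T_subset have "S \<subseteq> ida_carrier K" "R \<subseteq> ida_carrier K" by auto
    then have "ida_jn K' S' = ida_jn K' R' \<longleftrightarrow> ida_jn K S = ida_jn K R"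
      by (simp add: S(2) R(2) jn_target jn_closed inj_iff)
    also have "\<dots> \<longleftrightarrow> S = R" using S(1) R(1) by (rule jn_eq_iff)
    also have "\<dots> \<longleftrightarrow> S' = R'"
      using inj_on_image_eq_iff[OF bij_betw_imp_inj_on[OF bij] \<open>S \<subseteq> ida_carrier K\<close> \<open>R \<subseteq> ida_carrier K\<close>]
      by (simp add: S(2) R(2))
    finally show ?thesis .
  qed
  moreover have "s' = t' \<longleftrightarrow> ida_equiv K' s' t'" if "s' \<in> T' K'" "t' \<in> T' K'" for s' t'
  proof -
    from that obtain s t where st: "s \<in> T K" "s' = f s" "t \<in> T K" "t' = f t"
      using T' by blast
    with T_subset have "s \<in> ida_carrier K" "t \<in> ida_carrier K" by auto
    with st show ?thesis by (simp add: inj_iff equiv_target_iff eq_iff_equiv)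
  qed
  ultimately show ?thesis
    unfolding T_ODA_def using is_IDA_target complete_oml_tests_target[OF oml] by blast
qed

lemma T_target_eq_image:
  assumes "T4_cond T T'" "T4_cond T' T" "T1_cond T'"
  shows "T' K' = f ` T K"
proof
  show "f ` T K \<subseteq> T' K'"
    using assms(1) is_IDA is_IDA_target morphism unfolding T4_cond_def by blast
  show "T' K' \<subseteq> f ` T K"
  proof
    fix x' assume x': "x' \<in> T' K'"
    then have "x' \<in> ida_carrier K'" using assms(3) is_IDA_target unfolding T1_cond_def by blast
    moreover have "inv_into (ida_carrier K) f x' \<in> T K"
      using assms(2) is_IDA is_IDA_target morphism_inv_into x' unfolding T4_cond_def by blast
    ultimately show "x' \<in> f ` T K" using inv_into_target by (metis image_eqI)
  qed
qed

end

section \<open>\<T>-based orthomodular dynamic algebras\<close>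

locale T_based_ODA =
  fixes T :: "'a ida \<Rightarrow> 'a set" and K :: "'a ida"
  assumes T1: "T1_cond T" and T_ODA: "T_ODA T K"

sublocale T_based_ODA \<subseteq> IDA K
  using T_ODA by unfold_locales (simp add: T_ODA_def)

context T_based_ODA
begin

lemma T_subset: "T K \<subseteq> ida_carrier K"
  using T1 is_IDA unfolding T1_cond_def by blast

lemma unit_in_T: "ida_unit K \<in> T K"
  using T1 is_IDA unfolding T1_cond_def by blast

lemma mult_in_T: "s \<in> T K \<Longrightarrow> t \<in> T K \<Longrightarrow> ida_mult K s t \<in> T K"
  using T1 is_IDA unfolding T1_cond_def by blast

lemma inv_in_T: "t \<in> T K \<Longrightarrow> ida_inv K t \<in> T K"
  using T1 is_IDA unfolding T1_cond_def by blast

lemma generated_by_T: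
  assumes "T K \<subseteq> A" "A \<subseteq> ida_carrier K"
    and "\<And>x y. x \<in> A \<Longrightarrow> y \<in> A \<Longrightarrow> ida_mult K x y \<in> A" "\<And>x. x \<in> A \<Longrightarrow> ida_inv K x \<in> A"
    and "\<And>S. S \<subseteq> A \<Longrightarrow> ida_jn K S \<in> A"
  shows "A = ida_carrier K"
proof -
  have "\<forall>A. T K \<subseteq> A \<and> A \<subseteq> ida_carrier K \<and> (\<forall>x\<in>A. \<forall>y\<in>A. ida_mult K x y \<in> A) \<and>
      (\<forall>x\<in>A. ida_inv K x \<in> A) \<and> (\<forall>S. S \<subseteq> A \<longrightarrow> ida_jn K S \<in> A) \<longrightarrow> A = ida_carrier K"
    using T_ODA unfolding T_ODA_def by (elim conjE) assumption
  then show ?thesis using assms by (simp add: Ball_def)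
qed

lemma jn_eq_iff: "S \<subseteq> T K \<Longrightarrow> R \<subseteq> T K \<Longrightarrow> ida_jn K S = ida_jn K R \<longleftrightarrow> S = R"
  using T_ODA by (simp add: T_ODA_def)

lemma jn_image_Pow_T: "ida_jn K ` Pow (T K) = ida_carrier K"
proof (rule generated_by_T)
  have sub: "S \<subseteq> ida_carrier K" if "S \<subseteq> T K" for S
    using that T_subset by (rule subset_trans)
  show "T K \<subseteq> ida_jn K ` Pow (T K)"
  proof
    fix t assume "t \<in> T K"
    then have "t = ida_jn K {t}" "{t} \<in> Pow (T K)" using T_subset jn_singleton by auto
    then show "t \<in> ida_jn K ` Pow (T K)" by (rule image_eqI)
  qed
  show "ida_jn K ` Pow (T K) \<subseteq> ida_carrier K"
    using sub by (simp add: image_subset_iff jn_closed)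
  show "ida_mult K x y \<in> ida_jn K ` Pow (T K)" if "x \<in> ida_jn K ` Pow (T K)" "y \<in> ida_jn K ` Pow (T K)" for x y
  proof -
    from that obtain S R where "S \<subseteq> T K" "R \<subseteq> T K" "x = ida_jn K S" "y = ida_jn K R"
      by blast
    moreover from this have "(\<lambda>(s, r). ida_mult K s r) ` (S \<times> R) \<in> Pow (T K)"
      using mult_in_T by auto
    ultimately show ?thesis
      using sub by (simp add: mult_jn_jn)
  qed
  show "ida_inv K x \<in> ida_jn K ` Pow (T K)" if "x \<in> ida_jn K ` Pow (T K)" for x
  proof -
    from that obtain S where "S \<subseteq> T K" "x = ida_jn K S"
      by blast
    moreover from this have "ida_inv K ` S \<in> Pow (T K)"
      using inv_in_T by auto
    ultimately show ?thesis
      using sub by (simp add: inv_jn)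
  qed
  show "ida_jn K SS \<in> ida_jn K ` Pow (T K)" if "SS \<subseteq> ida_jn K ` Pow (T K)" for SS
  proof -
    define R where "R = {S \<in> Pow (T K). ida_jn K S \<in> SS}"
    have "SS = ida_jn K ` R" using that unfolding R_def by blast
    moreover have "ida_jn K (ida_jn K ` R) = ida_jn K (\<Union>R)"
      using sub by (intro jn_Union) (auto simp: R_def)
    moreover have "\<Union>R \<in> Pow (T K)" unfolding R_def by blast
    ultimately show ?thesis by simp
  qed
qed

lemma le_jn_iff_subset: "S \<subseteq> T K \<Longrightarrow> R \<subseteq> T K \<Longrightarrow> ida_le K (ida_jn K S) (ida_jn K R) \<longleftrightarrow> S \<subseteq> R"
proof -
  assume S: "S \<subseteq> T K" and R: "R \<subseteq> T K"
  have "ida_jn K {ida_jn K S, ida_jn K R} = ida_jn K (S \<union> R)"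
    using jn_Union[of "{S, R}"] S R T_subset by auto
  then show ?thesis
    unfolding ida_le_def using jn_eq_iff[of "S \<union> R" R] S R by auto
qed

lemma hK_jn:
  assumes "S \<subseteq> T K"
  shows "hK T K (ida_jn K S) = S"
proof -
  have "ida_le K t (ida_jn K S) \<longleftrightarrow> t \<in> S" if "t \<in> T K" for t
    using le_jn_iff_subset[of "{t}" S] that assms T_subset jn_singleton by auto
  with assms show ?thesis unfolding hK_def by blast
qed

lemma jn_hK:
  assumes "x \<in> ida_carrier K"
  shows "ida_jn K (hK T K x) = x"
proof -
  from assms jn_image_Pow_T obtain S where "S \<subseteq> T K" "x = ida_jn K S" by blast
  then show ?thesis by (simp add: hK_jn)
qed

lemma hK_subset: "hK T K x \<subseteq> T K"
  unfolding hK_def by blast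

lemma hK_singleton: "t \<in> T K \<Longrightarrow> hK T K t = {t}"
  using hK_jn[of "{t}"] T_subset jn_singleton by auto

lemma hK_bot: "hK T K (ida_bot K) = {}"
  unfolding ida_bot_def using hK_jn[of "{}"] by simp

lemma hK_inj_iff: "x \<in> ida_carrier K \<Longrightarrow> y \<in> ida_carrier K \<Longrightarrow> hK T K x = hK T K y \<longleftrightarrow> x = y"
  using jn_hK by metis

lemma le_iff_hK_subset:
  "x \<in> ida_carrier K \<Longrightarrow> y \<in> ida_carrier K \<Longrightarrow> ida_le K x y \<longleftrightarrow> hK T K x \<subseteq> hK T K y"
  using le_jn_iff_subset[OF hK_subset hK_subset] jn_hK by metis

lemma bot_closed: "ida_bot K \<in> ida_carrier K"
  unfolding ida_bot_def by (simp add: jn_closed)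

lemma ida_atom_iff: "ida_atom K a \<longleftrightarrow> a \<in> T K"
proof
  assume atom: "ida_atom K a"
  then have a: "a \<in> ida_carrier K" "a \<noteq> ida_bot K" unfolding ida_atom_def by auto
  then obtain t where t: "t \<in> hK T K a"
    using hK_bot bot_closed hK_inj_iff by blast
  then have "t \<in> T K" "ida_le K t a"
    using a T_subset hK_singleton le_iff_hK_subset by (auto simp: hK_def)
  moreover have "t \<noteq> ida_bot K"
    using hK_singleton hK_bot \<open>t \<in> T K\<close> by auto
  ultimately show "a \<in> T K"
    using atom T_subset unfolding ida_atom_def by auto
next
  assume a: "a \<in> T K"
  then have aC: "a \<in> ida_carrier K" using T_subset by blast
  show "ida_atom K a"
    unfolding ida_atom_def
  proof (intro conjI ballI impI)
    show "a \<in> ida_carrier K" by (fact aC)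
    show "a \<noteq> ida_bot K" using a hK_singleton hK_bot by auto
    show "x = ida_bot K \<or> x = a" if "x \<in> ida_carrier K" "ida_le K x a" for x
    proof -
      have "hK T K x \<subseteq> {a}"
        using le_iff_hK_subset[OF that(1) aC] that(2) by (simp only: hK_singleton[OF a])
      then consider "hK T K x = hK T K (ida_bot K)" | "hK T K x = hK T K a"
        unfolding hK_bot hK_singleton[OF a] by blast
      then show ?thesis
        using hK_inj_iff that(1) aC bot_closed by metis
    qed
  qed
qed

lemma is_atomic_lattice: "atomic_lattice K"
  unfolding atomic_lattice_def
proof (intro conjI ballI impI)
  fix x y assume x: "x \<in> ida_carrier K" and y: "y \<in> ida_carrier K"
  show "\<exists>u. is_lub (ida_carrier K) (ida_le K) {x, y} u"
    using x y by (auto simp: is_lub_def intro!: exI[of _ "ida_jn K {x, y}"] jn_closed jn_upper jn_least)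
  let ?m = "ida_jn K (hK T K x \<inter> hK T K y)"
  have m: "?m \<in> ida_carrier K" "hK T K ?m = hK T K x \<inter> hK T K y"
    using hK_subset T_subset by (auto intro!: jn_closed hK_jn)
  show "\<exists>u. is_glb (ida_carrier K) (ida_le K) {x, y} u"
    using x y m by (auto simp: is_glb_def le_iff_hK_subset intro!: exI[of _ ?m])
next
  fix x assume x: "x \<in> ida_carrier K" "x \<noteq> ida_bot K"
  then obtain t where t: "t \<in> hK T K x"
    using hK_bot bot_closed hK_inj_iff by blast
  then have "t \<in> T K" "ida_le K t x"
    using x T_subset hK_singleton le_iff_hK_subset by (auto simp: hK_def)
  then show "\<exists>a. ida_atom K a \<and> ida_le K a x"
    using ida_atom_iff by blast
qed

lemma bij_hK: "bij_betw (hK T K) (ida_carrier K) (Pow (T K))"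
proof (rule bij_betwI')
  show "hK T K x = hK T K y \<longleftrightarrow> x = y" if "x \<in> ida_carrier K" "y \<in> ida_carrier K" for x y
    using that by (rule hK_inj_iff)
  show "hK T K x \<in> Pow (T K)" for x
    using hK_subset by blast
  show "\<exists>x\<in>ida_carrier K. S = hK T K x" if "S \<in> Pow (T K)" for S
    using that T_subset hK_jn jn_closed by (metis PowD subset_trans)
qed

lemma morphism_hK: "ida_morphism K (PT T K) (hK T K)"
  unfolding ida_morphism_def
proof (intro conjI ballI allI impI)
  show "hK T K \<in> ida_carrier K \<rightarrow> ida_carrier (PT T K)"
    using hK_subset by (simp add: PT_def)
  show "hK T K (ida_jn K S) = ida_jn (PT T K) (hK T K ` S)" if "S \<subseteq> ida_carrier K" for S
  proof -
    have "ida_jn K S = ida_jn K (ida_jn K ` hK T K ` S)"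
      using that jn_hK by (simp add: image_image subset_iff)
    also have "\<dots> = ida_jn K (\<Union> (hK T K ` S))"
      using hK_subset T_subset by (intro jn_Union) blast
    finally show ?thesis
      using hK_jn[of "\<Union> (hK T K ` S)"] hK_subset by (auto simp: PT_def)
  qed
qed (simp_all add: PT_def jn_hK hK_singleton unit_in_T)

lemma iso_hK: "ida_iso K (PT T K) (hK T K)"
  unfolding ida_iso_def using morphism_hK bij_hK by (simp add: PT_def)

end

theorem lemma4p5:
  fixes Ta :: "'a ida \<Rightarrow> 'a set"
    and Tp :: "'a set ida \<Rightarrow> 'a set set"
    and TLa :: "('a \<Rightarrow> 'a) ida \<Rightarrow> ('a \<Rightarrow> 'a) set"
    and TLp :: "('a set \<Rightarrow> 'a set) ida \<Rightarrow> ('a set \<Rightarrow> 'a set) set"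
    and TPa :: "('a \<Rightarrow> 'a) set ida \<Rightarrow> ('a \<Rightarrow> 'a) set set"
    and TPp :: "('a set \<Rightarrow> 'a set) set ida \<Rightarrow> ('a set \<Rightarrow> 'a set) set set"
    and K :: "'a ida"
  assumes "T_functor Ta Tp TLa TLp TPa TPp"
    and "T_ODA Ta K"
  shows "atomic_lattice K \<and> {a. ida_atom K a} = Ta K \<and>
         T_ODA Tp (PT Ta K) \<and> ida_iso K (PT Ta K) (hK Ta K)"
proof -
  have T: "T1_cond Ta" "T1_cond Tp" "T4_cond Ta Tp" "T4_cond Tp Ta"
    using assms(1) unfolding T_functor_def by auto
  interpret T_based_ODA Ta K
    using T(1) assms(2) by unfold_locales
  interpret IDA_iso K "PT Ta K" "hK Ta K"
    by unfold_locales (use iso_hK is_IDA in \<open>simp_all add: ida_iso_def\<close>)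
  have "Tp (PT Ta K) = hK Ta K ` Ta K"
    using T by (intro T_target_eq_image)
  then have "T_ODA Tp (PT Ta K)"
    using T_ODA T_subset by (intro T_ODA_target)
  then show ?thesis
    using is_atomic_lattice ida_atom_iff iso_hK by auto
qed

end
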